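(* Let $m,k$ be positive integers and suppose $q^mt_1t_2\cdots t_k=1$ (i.e. regard $q,t_1,\ldots,t_{k-1}$ as independent variables and $t_k=q^{-m}(t_1\cdots t_{k-1})^{-1}$). Then $$\sum_{\text{cyclic permutations of }t_1,\ldots,t_k}\ \ \widetilde{\sum_{1\le i_1\le\cdots\le i_k\le m}}\ \left\{\begin{matrix}i_1,\ldots,i_k\\ t_1,\ldots,t_k\end{matrix}\right\}_m=\frac{m^{k-1}}{(k-1)!}.$$ In particular the left side is independent of $q,t_1,\ldots,t_k$.
   Context: $(a)_n:=\prod_{j=0}^{n-1}(1-aq^j)$ (so $(a)_0=1$). For integers $1\le i_1\le\cdots\le i_k\le m$, $$\left\{\begin{matrix}i_1,\ldots,i_k\\ t_1,\ldots,t_k\end{matrix}\right\}_m:=\frac{1}{(q)_{i_1-1}(q^{i_1}t_1)_{i_2-i_1}(q^{i_2}t_1t_2)_{i_3-i_2}\cdots(q^{i_k}t_1\cdots t_k)_{m-i_k}}.$$ For a function $f(i_1,\ldots,i_k)$, $\widetilde{\sum}_{1\le i_1\le\cdots\le i_k\le m}f:=\sum_{1\le i_1\le\cdots\le i_k\le m}f(i_1,\ldots,i_k)/\#\mathrm{Stab}(i_1,\ldots,i_k)$, where $\mathrm{Stab}(i_1,\ldots,i_k)$ is the set of permutations of $\{1,\ldots,k\}$ fixing the tuple (so its order is the product of factorials of the multiplicities). The outer sum runs over the $k$ cyclic rotations $(t_1,\ldots,t_k)\mapsto(t_{j+1},\ldots,t_k,t_1,\ldots,t_j)$, $0\le j<k$,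 applied to the variables in the summand. *)

theory Defs
  imports Complex_Main "HOL-Combinatorics.Permutations"
begin

definition qpoch :: "complex \<Rightarrow> complex \<Rightarrow> nat \<Rightarrow> complex" where
  "qpoch q a n = (\<Prod>j<n. (1 - a * q ^ j))"

text \<open>Denominator of the bracket symbol {i_1..i_k ; t_1..t_k}_m, with 0-based lists
  i = [i_1,...,i_k], t = [t_1,...,t_k]:
  (q)_{i_1-1} * prod_{r} (q^{i_r} t_1...t_r)_{i_{r+1}-i_r}, where i_{k+1} := m.\<close>
definition bracket_denom :: "nat \<Rightarrow> complex \<Rightarrow> complex list \<Rightarrow> nat list \<Rightarrow> complex" where
  "bracket_denom m q t i =
     qpoch q q (i ! 0 - 1) *
     (\<Prod>r<length i. qpoch q (q ^ (i ! r) * (\<Prod>s\<le>r. t ! s))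
                        ((if Suc r < length i then i ! Suc r else m) - i ! r))"

definition bracket :: "nat \<Rightarrow> complex \<Rightarrow> complex list \<Rightarrow> nat list \<Rightarrow> complex" where
  "bracket m q t i = 1 / bracket_denom m q t i"

definition index_tuples :: "nat \<Rightarrow> nat \<Rightarrow> nat list set" where
  "index_tuples k m = {i. length i = k \<and> sorted i \<and> set i \<subseteq> {1..m}}"

definition stab :: "nat list \<Rightarrow> (nat \<Rightarrow> nat) set" where
  "stab i = {p. p permutes {0..<length i} \<and> (\<forall>j<length i. i ! (p j) = i ! j)}"

definition tilde_sum :: "nat \<Rightarrow> complex \<Rightarrow> complex list \<Rightarrow> complex" where
  "tilde_sum m q t = (\<Sum>i\<in>index_tuples (length t) m. bracket m q t i / of_nat (card (stab i)))"

end

theory Submission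
  imports Defs "HOL-Computational_Algebra.Polynomial"
begin

(* Encode a tuple i_1 <= ... <= i_k by its multiplicity vector d, a weak composition of k
   into m parts: the stabiliser has order prod_l d_l!, and the bracket denominator for the
   rotation t_(a+1), ..., t_(a+k) becomes prod_(j=1..m-1) (1 - x_j / x_0) with nodes
   x_s = q^s t_(a+1) ... t_(a+d_1+...+d_s), indices of t read cyclically.
   The cyclic group of order m acts on pairs (a, d) by rotating d by r and shifting a by
   d_1 + ... + d_r. Because q^m t_1 ... t_k = 1, the nodes of the image pair are the nodes
   x_(r+j) up to a common factor, so along an orbit the denominators are
   prod_(s ~= r) (1 - x_s / x_r), whose reciprocals sum to 1 by Lagrange interpolation of
   z^(m-1) at the nodes. Averaging over the action turns the left-hand side into
   (k/m) sum_d 1 / prod_l d_l! = k m^k / (m k!) by the multinomial theorem. *)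

lemma mset_rotate [simp]: "mset (rotate n xs) = mset xs"
  by (metis append_take_drop_id mset_append rotate_drop_take union_commute)

lemma sum_list_rotate [simp]:
  "sum_list (rotate n xs) = sum_list (xs :: 'a :: comm_monoid_add list)"
  by (metis mset_rotate sum_mset_sum_list)

lemma prod_list_rotate [simp]:
  "prod_list (rotate n xs) = prod_list (xs :: 'a :: comm_monoid_mult list)"
  by (metis mset_rotate prod_mset_prod_list)

lemma mod_add_right_cancel_less:
  fixes a b c k :: nat
  assumes "(a + c) mod k = (b + c) mod k" "a < k" "b < k"
  shows "a = b"
proof -
  have "a = b" if eq: "(a + c) mod k = (b + c) mod k" and "a \<le> b" "b < k" for a b
  proof -
    obtain s where "b + c = a + c + k * s"
      using mod_eq_nat1E[OF eq[symmetric]] \<open>a \<le> b\<close> by auto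
    then show ?thesis
      using \<open>b < k\<close> by (cases s) auto
  qed
  then show ?thesis
    using assms by (metis linorder_le_cases)
qed

lemma bij_betw_add_mod:
  assumes "r < (m::nat)"
  shows "bij_betw (\<lambda>j. (r + j) mod m) {1..<m} ({..<m} - {r})"
proof (rule bij_betwI[where g = "\<lambda>s. (s + (m - r)) mod m"])
  have mod_eq: "x mod m = (if x < m then x else x - m)" if "x < 2 * m" for x
    using that by (simp add: mod_if le_mod_geq)
  show "(\<lambda>j. (r + j) mod m) \<in> {1..<m} \<rightarrow> {..<m} - {r}"
    using assms by (auto simp: mod_eq split: if_splits)
  show "(\<lambda>s. (s + (m - r)) mod m) \<in> {..<m} - {r} \<rightarrow> {1..<m}"
    using assms by (auto simp: mod_eq split: if_splits)
  show "((r + j) mod m + (m - r)) mod m = j" if "j \<in> {1..<m}" for j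
    using assms that by (auto simp: mod_eq split: if_splits)
  show "(r + (s + (m - r)) mod m) mod m = s" if "s \<in> {..<m} - {r}" for s
    using assms that by (auto simp: mod_eq split: if_splits)
qed

lemma sum_weighted_orbit_average:
  fixes w g :: "'b \<Rightarrow> 'a :: comm_semiring_1"
  assumes "\<And>r. r < m \<Longrightarrow> bij_betw (\<sigma> r) A A"
    and "\<And>r p. r < m \<Longrightarrow> p \<in> A \<Longrightarrow> w (\<sigma> r p) = w p"
    and "\<And>p. p \<in> A \<Longrightarrow> (\<Sum>r<m. g (\<sigma> r p)) = 1"
  shows "of_nat m * (\<Sum>p\<in>A. w p * g p) = (\<Sum>p\<in>A. w p)"
proof -
  have shift: "(\<Sum>p\<in>A. w p * g p) = (\<Sum>p\<in>A. w p * g (\<sigma> r p))" if "r < m" for r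
    using sum.reindex_bij_betw[OF assms(1)[OF that], of "\<lambda>p. w p * g p"] assms(2)[OF that]
    by simp
  have "of_nat m * (\<Sum>p\<in>A. w p * g p) = (\<Sum>r<m. \<Sum>p\<in>A. w p * g p)"
    by simp
  also have "\<dots> = (\<Sum>r<m. \<Sum>p\<in>A. w p * g (\<sigma> r p))"
    by (rule sum.cong[OF refl]) (simp add: shift)
  also have "\<dots> = (\<Sum>p\<in>A. w p * (\<Sum>r<m. g (\<sigma> r p)))"
    by (simp add: sum.swap[of _ "{..<m}"] sum_distrib_left)
  also have "\<dots> = (\<Sum>p\<in>A. w p)"
    by (simp add: assms(3))
  finally show ?thesis .
qed

section \<open>Lagrange interpolation\<close>

lemma sum_power_div_prod_diff_eq_1:
  fixes x :: "nat \<Rightarrow> 'a :: field"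
  assumes inj: "inj_on x {..<n}" and "n > 0"
  shows "(\<Sum>r<n. x r ^ (n - 1) / (\<Prod>s\<in>{..<n} - {r}. x r - x s)) = 1"
proof -
  define B where "B r = (\<Prod>s\<in>{..<n} - {r}. [:- x s, 1:])" for r
  define D where "D r = (\<Prod>s\<in>{..<n} - {r}. x r - x s)" for r
  define L where "L = (\<Sum>r<n. smult (x r ^ (n - 1) / D r) (B r))"
  \<comment> \<open>L interpolates z^(n-1) at the n nodes, hence equals it; the sum is its leading
    coefficient.\<close>
  have degree_B: "degree (B r) = n - 1" and coeff_B: "coeff (B r) (n - 1) = 1" if "r < n" for r
    using that lead_coeff_prod[of "\<lambda>s. [:- x s, 1:]" "{..<n} - {r}"]
    by (simp_all add: B_def degree_prod_sum_eq)
  have poly_B: "poly (B r) (x s) = (if s = r then D r else 0)" if "r < n" "s < n" for r s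
    using that inj by (auto simp: B_def D_def poly_prod inj_on_eq_iff)
  have D_nonzero: "D r \<noteq> 0" if "r < n" for r
    using that inj by (auto simp: D_def inj_on_eq_iff)
  have "poly L (x s) = x s ^ (n - 1)" if "s < n" for s
  proof -
    have "poly L (x s) = (\<Sum>r<n. x r ^ (n - 1) / D r * poly (B r) (x s))"
      by (simp add: L_def poly_sum)
    also have "\<dots> = (\<Sum>r<n. if r = s then x s ^ (n - 1) else 0)"
      by (rule sum.cong) (use that D_nonzero in \<open>auto simp: poly_B\<close>)
    finally show ?thesis
      using that by simp
  qed
  then have "poly L (x s) = poly (monom 1 (n - 1)) (x s)" if "s < n" for s
    using that by (simp add: poly_monom)
  moreover have "degree L \<le> n - 1"
    unfolding L_def by (intro degree_sum_le) (auto simp: degree_B)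
  ultimately have L_eq: "L = monom 1 (n - 1)"
    using \<open>n > 0\<close> card_image[OF inj]
    by (intro poly_eqI_degree[where A = "x ` {..<n}"]) (auto simp: degree_monom_eq)
  have "(\<Sum>r<n. x r ^ (n - 1) / D r) = coeff L (n - 1)"
    unfolding L_def coeff_sum by (intro sum.cong) (use coeff_B in auto)
  also have "\<dots> = 1"
    by (simp add: L_eq)
  finally show ?thesis
    by (simp add: D_def)
qed

corollary sum_inverse_prod_one_minus_ratio_eq_1:
  fixes x :: "nat \<Rightarrow> 'a :: field"
  assumes "inj_on x {..<n}" and "\<And>r. r < n \<Longrightarrow> x r \<noteq> 0" and "n > 0"
  shows "(\<Sum>r<n. 1 / (\<Prod>s\<in>{..<n} - {r}. 1 - x s / x r)) = 1"
proof -
  have "(\<Prod>s\<in>{..<n} - {r}. 1 - x s / x r) = (\<Prod>s\<in>{..<n} - {r}. x r - x s) / x r ^ (n - 1)"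
    if "r < n" for r
  proof -
    have "(\<Prod>s\<in>{..<n} - {r}. 1 - x s / x r) = (\<Prod>s\<in>{..<n} - {r}. (x r - x s) / x r)"
      using assms(2)[OF that] by (intro prod.cong) (auto simp: field_simps)
    then show ?thesis
      using that by (simp add: prod_dividef)
  qed
  then have "(\<Sum>r<n. 1 / (\<Prod>s\<in>{..<n} - {r}. 1 - x s / x r))
      = (\<Sum>r<n. x r ^ (n - 1) / (\<Prod>s\<in>{..<n} - {r}. x r - x s))"
    by (intro sum.cong) simp_all
  then show ?thesis
    using sum_power_div_prod_diff_eq_1[OF assms(1,3)] by simp
qed

section \<open>Permutations preserving a function\<close>

lemma restrict_to_fibre_permutes:
  assumes "p permutes S" "finite S" "\<forall>x\<in>S. f (p x) = f x"
  shows "(\<lambda>x. if f x = v then p x else x) permutes {x\<in>S. f x = v}"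
proof (rule inj_imp_permutes)
  show "inj_on (\<lambda>x. if f x = v then p x else x) {x\<in>S. f x = v}"
    using permutes_inj[OF assms(1)] by (auto simp: inj_on_def dest: injD)
qed (use assms permutes_in_image[OF assms(1)] permutes_not_in[OF assms(1)] in auto)

lemma card_permutes_preserving:
  assumes "finite S"
  shows "card {p. p permutes S \<and> (\<forall>x\<in>S. f (p x) = f x)}
       = (\<Prod>v\<in>f ` S. fact (card {x\<in>S. f x = v}))"
proof -
  define fibre where "fibre v = {x\<in>S. f x = v}" for v
  define preserving where "preserving = {p. p permutes S \<and> (\<forall>x\<in>S. f (p x) = f x)}"
  define fibrewise where "fibrewise = (\<Pi>\<^sub>E v\<in>f ` S. {g. g permutes fibre v})"
  define split where
    "split p = (\<lambda>v\<in>f ` S. \<lambda>x. if f x = v then p x else x)" for p :: "'a \<Rightarrow> 'a"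
  define glue where
    "glue G x = (if x \<in> S then G (f x) x else x)" for G :: "'b \<Rightarrow> 'a \<Rightarrow> 'a" and x
  have "bij_betw split preserving fibrewise"
  proof (rule bij_betw_byWitness[where f' = glue])
    show "\<forall>p\<in>preserving. glue (split p) = p"
      by (auto simp: preserving_def glue_def split_def fun_eq_iff permutes_not_in)
    show "\<forall>G\<in>fibrewise. split (glue G) = G"
    proof
      fix G assume G: "G \<in> fibrewise"
      then have "G v x = x" if "v \<in> f ` S" "x \<notin> fibre v" for v x
        using that by (auto simp: fibrewise_def intro: permutes_not_in)
      then show "split (glue G) = G"
        using G by (auto simp: fibrewise_def glue_def split_def fun_eq_iff fibre_def PiE_def
            extensional_def)
    qed
    show "split ` preserving \<subseteq> fibrewise"
      using assms by (auto simp: preserving_def fibrewise_def split_def fibre_def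
          intro: restrict_to_fibre_permutes)
    show "glue ` fibrewise \<subseteq> preserving"
    proof clarify
      fix G assume G: "G \<in> fibrewise"
      have stays: "G (f x) x \<in> fibre (f x)" if "x \<in> S" for x
        using G that permutes_in_image[of "G (f x)" "fibre (f x)" x]
        by (auto simp: fibrewise_def fibre_def)
      then have preserves: "f (glue G x) = f x" if "x \<in> S" for x
        using that by (simp add: glue_def fibre_def)
      have "inj_on (glue G) S"
      proof (rule inj_onI)
        fix x y assume "x \<in> S" "y \<in> S" "glue G x = glue G y"
        moreover from this have "f x = f y"
          using preserves by metis
        ultimately show "x = y"
          using G permutes_inj[of "G (f x)" "fibre (f x)"]
          by (auto simp: fibrewise_def glue_def fibre_def dest: injD)
      qed
      then show "glue G \<in> preserving"
        using assms stays preserves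
        by (auto simp: preserving_def glue_def fibre_def intro!: inj_imp_permutes)
    qed
  qed
  then have "card preserving = (\<Prod>v\<in>f ` S. card {g. g permutes fibre v})"
    using assms by (simp add: bij_betw_same_card card_PiE fibrewise_def)
  also have "\<dots> = (\<Prod>v\<in>f ` S. fact (card (fibre v)))"
    using assms by (simp add: card_permutations fibre_def)
  finally show ?thesis
    by (simp add: preserving_def fibre_def)
qed

section \<open>Sorted tuples and weak compositions\<close>

definition weak_compositions :: "nat \<Rightarrow> nat \<Rightarrow> nat list set" where
  "weak_compositions m k = {d. length d = m \<and> sum_list d = k}"

fun tuple_of_counts :: "nat \<Rightarrow> nat list \<Rightarrow> nat list" where
  "tuple_of_counts b [] = []"
| "tuple_of_counts b (c # cs) = replicate c b @ tuple_of_counts (Suc b) cs"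

lemma length_tuple_of_counts: "length (tuple_of_counts b d) = sum_list d"
  by (induction d arbitrary: b) auto

lemma set_tuple_of_counts: "set (tuple_of_counts b d) \<subseteq> {b..<b + length d}"
  by (induction d arbitrary: b) (auto, fastforce+)

lemma sorted_tuple_of_counts: "sorted (tuple_of_counts b d)"
proof (induction d arbitrary: b)
  case (Cons c cs)
  then show ?case
    using set_tuple_of_counts[of "Suc b" cs] by (auto simp: sorted_append)
qed simp

lemma count_tuple_of_counts:
  "count (mset (tuple_of_counts b d)) v = (if b \<le> v \<and> v < b + length d then d ! (v - b) else 0)"
proof (induction d arbitrary: b)
  case (Cons c cs)
  then show ?case
    by (cases "v = b") (auto simp: nth_Cons' Suc_diff_Suc le_eq_less_or_eq)
qed simp

lemma length_filter_le_tuple_of_counts: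
  "length (filter (\<lambda>x. x \<le> j) (tuple_of_counts b d)) = sum_list (take (Suc j - b) d)"
proof (induction d arbitrary: b)
  case (Cons c cs)
  then show ?case
    by (cases "Suc j - b") (auto simp: filter_replicate Suc_diff_le)
qed simp

lemma finite_weak_compositions: "finite (weak_compositions m k)"
proof (rule finite_subset)
  show "weak_compositions m k \<subseteq> {d. set d \<subseteq> {0..k} \<and> length d = m}"
    unfolding weak_compositions_def using member_le_sum_list by fastforce
qed (simp add: finite_lists_length_eq)

lemma rotate_in_weak_compositions:
  "d \<in> weak_compositions m k \<Longrightarrow> rotate r d \<in> weak_compositions m k"
  by (simp add: weak_compositions_def)

lemma bij_betw_tuple_of_counts:
  "bij_betw (tuple_of_counts 1) (weak_compositions m k) (index_tuples k m)"
proof (rule bij_betw_imageI)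
  show "inj_on (tuple_of_counts 1) (weak_compositions m k)"
  proof (rule inj_onI)
    fix d d' assume "d \<in> weak_compositions m k" "d' \<in> weak_compositions m k"
      and eq: "tuple_of_counts 1 d = tuple_of_counts 1 d'"
    then have "length d = length d'"
      by (simp add: weak_compositions_def)
    moreover have "d ! l = d' ! l" if "l < length d" for l
      using arg_cong[OF eq, of "\<lambda>i. count (mset i) (Suc l)"] that \<open>length d = length d'\<close>
      by (simp add: count_tuple_of_counts)
    ultimately show "d = d'"
      by (rule nth_equalityI)
  qed
  show "tuple_of_counts 1 ` weak_compositions m k = index_tuples k m"
  proof (intro equalityI subsetI)
    fix i assume "i \<in> tuple_of_counts 1 ` weak_compositions m k"
    then obtain d where "d \<in> weak_compositions m k" "i = tuple_of_counts 1 d"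
      by blast
    then show "i \<in> index_tuples k m"
      using set_tuple_of_counts[of 1 d]
      by (auto simp: index_tuples_def weak_compositions_def length_tuple_of_counts
          sorted_tuple_of_counts)
  next
    fix i assume "i \<in> index_tuples k m"
    then have i: "length i = k" "sorted i" "set i \<subseteq> {1..m}"
      by (auto simp: index_tuples_def)
    define d where "d = map (\<lambda>l. count (mset i) (Suc l)) [0..<m]"
    have "count (mset (tuple_of_counts 1 d)) v = count (mset i) v" for v
      using i(3) by (auto simp: d_def count_tuple_of_counts count_eq_zero_iff)
    then have mset_eq: "mset (tuple_of_counts 1 d) = mset i"
      by (simp add: multiset_eqI)
    then have "tuple_of_counts 1 d = i"
      using i(2) sorted_tuple_of_counts by (metis properties_for_sort sorted_sort_id)
    moreover have "sum_list d = k"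
      using i(1) arg_cong[OF mset_eq, of size] by (simp add: length_tuple_of_counts)
    then have "d \<in> weak_compositions m k"
      by (simp add: weak_compositions_def d_def)
    ultimately show "i \<in> tuple_of_counts 1 ` weak_compositions m k"
      by blast
  qed
qed

lemma card_stab_tuple_of_counts: "card (stab (tuple_of_counts 1 d)) = prod_list (map fact d)"
proof -
  define i where "i = tuple_of_counts 1 d"
  have "card (stab i) = (\<Prod>v\<in>(!) i ` {0..<length i}. fact (card {x\<in>{0..<length i}. i ! x = v}))"
    using card_permutes_preserving[of "{0..<length i}" "(!) i"]
    by (simp add: stab_def atLeast0LessThan Ball_def)
  also have "\<dots> = (\<Prod>v\<in>set i. fact (count (mset i) v))"
  proof (rule prod.cong)
    show "(!) i ` {0..<length i} = set i"
      by (auto simp: set_conv_nth)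
    show "fact (card {x\<in>{0..<length i}. i ! x = v}) = fact (count (mset i) v)" for v
      by (simp add: count_mset count_list_eq_length_filter length_filter_conv_card
          atLeast0LessThan eq_commute)
  qed
  also have "\<dots> = (\<Prod>v\<in>{1..<1 + length d}. fact (count (mset i) v))"
    using set_tuple_of_counts[of 1 d]
    by (intro prod.mono_neutral_left) (auto simp: i_def simp flip: count_mset_0_iff)
  also have "\<dots> = (\<Prod>l\<in>{0..<length d}. fact (count (mset i) (Suc l)))"
    using prod.shift_bounds_Suc_ivl[of "\<lambda>v. fact (count (mset i) v)" 0 "length d"] by simp
  also have "\<dots> = prod_list (map fact d)"
    by (simp add: i_def count_tuple_of_counts prod.list_conv_set_nth)
  finally show ?thesis
    by (simp add: i_def)
qed

lemma tilde_sum_eq_sum_weak_compositions: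
  "tilde_sum m q t = (\<Sum>d\<in>weak_compositions m (length t).
     bracket m q t (tuple_of_counts 1 d) / of_nat (prod_list (map fact d)))"
  unfolding tilde_sum_def sum.reindex_bij_betw[OF bij_betw_tuple_of_counts, symmetric]
  by (simp only: card_stab_tuple_of_counts)

lemma weak_compositions_0: "weak_compositions 0 k = (if k = 0 then {[]} else {})"
  by (auto simp: weak_compositions_def)

lemma weak_compositions_Suc:
  "weak_compositions (Suc m) k = (\<lambda>(c, d). c # d) ` (SIGMA c:{..k}. weak_compositions m (k - c))"
proof (intro equalityI subsetI)
  fix d assume "d \<in> weak_compositions (Suc m) k"
  then show "d \<in> (\<lambda>(c, d). c # d) ` (SIGMA c:{..k}. weak_compositions m (k - c))"
    by (cases d) (auto simp: weak_compositions_def image_iff)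
qed (auto simp: weak_compositions_def)

lemma sum_weak_compositions_inverse_fact:
  "(\<Sum>d\<in>weak_compositions m k. 1 / of_nat (prod_list (map fact d)) :: 'a :: field_char_0)
     = of_nat m ^ k / fact k"
proof (induction m arbitrary: k)
  case 0
  then show ?case
    by (simp add: weak_compositions_0)
next
  case (Suc m)
  have inj: "inj_on (\<lambda>(c, d). c # d) (SIGMA c:{..k}. weak_compositions m (k - c))"
    by (auto simp: inj_on_def)
  have "(\<Sum>d\<in>weak_compositions (Suc m) k. 1 / of_nat (prod_list (map fact d)) :: 'a)
      = (\<Sum>(c, d)\<in>(SIGMA c:{..k}. weak_compositions m (k - c)).
           1 / of_nat (prod_list (map fact (c # d))))"
    unfolding weak_compositions_Suc by (subst sum.reindex[OF inj]) (simp add: case_prod_unfold)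
  also have "\<dots> = (\<Sum>c\<le>k. \<Sum>d\<in>weak_compositions m (k - c).
                     1 / fact c * (1 / of_nat (prod_list (map fact d))))"
    by (subst sum.Sigma[symmetric]) (auto simp: finite_weak_compositions)
  also have "\<dots> = (\<Sum>c\<le>k. 1 / fact c * (of_nat m ^ (k - c) / fact (k - c)))"
    by (simp only: sum_distrib_left[symmetric] Suc.IH)
  also have "\<dots> = (\<Sum>c\<le>k. of_nat (k choose c) * 1 ^ c * of_nat m ^ (k - c)) / fact k"
    by (simp add: sum_divide_distrib binomial_fact)
  also have "\<dots> = of_nat (Suc m) ^ k / fact k"
    using binomial_ring[of 1 "of_nat m :: 'a" k] by (simp add: add.commute)
  finally show ?case .
qed

section \<open>The bracket denominator as a product over levels\<close>

lemma qpoch_eq_prod_atLeastLessThan: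
  "qpoch q (q ^ a * z) n = (\<Prod>j\<in>{a..<a + n}. 1 - q ^ j * z)"
proof (induction n)
  case (Suc n)
  then show ?case
    by (simp add: qpoch_def power_add mult_ac)
qed (simp add: qpoch_def)

text \<open>Regrouping a product over [lo, m) along the cut points i: the factor at j is tagged by the
  number of cut points up to j.\<close>
lemma prod_intervals_sorted:
  fixes F :: "nat \<Rightarrow> nat \<Rightarrow> 'a :: comm_monoid_mult"
  assumes "sorted i" "set i \<subseteq> {lo..m}"
  shows "(\<Prod>j\<in>{lo..<(if i = [] then m else i ! 0)}. F j 0) *
         (\<Prod>r<length i. \<Prod>j\<in>{i ! r..<(if Suc r < length i then i ! Suc r else m)}. F j (Suc r))
         = (\<Prod>j\<in>{lo..<m}. F j (length (filter (\<lambda>x. x \<le> j) i)))"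
  using assms
proof (induction i arbitrary: lo F)
  case (Cons x xs)
  have x: "lo \<le> x" "x \<le> m" "\<forall>y\<in>set xs. x \<le> y"
    using Cons.prems by auto
  then have "set xs \<subseteq> {x..m}"
    using Cons.prems by auto
  have "filter (\<lambda>y. y \<le> j) (x # xs) = []" if "j < x" for j
    using x that by (force simp: filter_empty_conv)
  then have head: "(\<Prod>j\<in>{lo..<x}. F j 0)
      = (\<Prod>j\<in>{lo..<x}. F j (length (filter (\<lambda>y. y \<le> j) (x # xs))))"
    by (intro prod.cong) auto
  have "(\<Prod>r<length (x # xs).
          \<Prod>j\<in>{(x # xs) ! r..<(if Suc r < length (x # xs) then (x # xs) ! Suc r else m)}.
            F j (Suc r))
      = (\<Prod>j\<in>{x..<(if xs = [] then m else xs ! 0)}. F j (Suc 0)) *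
        (\<Prod>r<length xs. \<Prod>j\<in>{xs ! r..<(if Suc r < length xs then xs ! Suc r else m)}.
            F j (Suc (Suc r)))"
    by (simp only: length_Cons prod.lessThan_Suc_shift) (cases xs, auto)
  also have "\<dots> = (\<Prod>j\<in>{x..<m}. F j (length (filter (\<lambda>y. y \<le> j) (x # xs))))"
    using Cons.IH[of x "\<lambda>j c. F j (Suc c)"] Cons.prems \<open>set xs \<subseteq> {x..m}\<close>
    by (auto intro!: prod.cong)
  finally show ?case
    using head prod.atLeastLessThan_concat[OF x(1,2),
        of "\<lambda>j. F j (length (filter (\<lambda>y. y \<le> j) (x # xs)))"]
    by simp
qed simp

lemma bracket_denom_eq_prod_levels:
  assumes "sorted i" "set i \<subseteq> {1..m}" "i \<noteq> []"
  shows "bracket_denom m q t i =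
    (\<Prod>j\<in>{1..<m}. 1 - q ^ j * (\<Prod>s<length (filter (\<lambda>x. x \<le> j) i). t ! s))"
proof -
  define F where "F j c = 1 - q ^ j * (\<Prod>s<c. t ! s)" for j c
  define next_cut where "next_cut r = (if Suc r < length i then i ! Suc r else m)" for r
  have "1 \<le> i ! 0"
    using assms(2,3) nth_mem[of 0 i] by fastforce
  then have first: "qpoch q q (i ! 0 - 1) = (\<Prod>j\<in>{1..<i ! 0}. F j 0)"
    using qpoch_eq_prod_atLeastLessThan[of q 1 1 "i ! 0 - 1"] by (simp add: F_def)
  have "i ! r \<le> next_cut r" if "r < length i" for r
    using assms(1) that subsetD[OF assms(2) nth_mem[OF that]]
    by (auto simp: next_cut_def sorted_iff_nth_mono)
  then have later: "qpoch q (q ^ (i ! r) * (\<Prod>s\<le>r. t ! s)) (next_cut r - i ! r)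
      = (\<Prod>j\<in>{i ! r..<next_cut r}. F j (Suc r))" if "r < length i" for r
    using that by (simp add: qpoch_eq_prod_atLeastLessThan F_def lessThan_Suc_atMost)
  have "bracket_denom m q t i
      = (\<Prod>j\<in>{1..<(if i = [] then m else i ! 0)}. F j 0) *
        (\<Prod>r<length i. \<Prod>j\<in>{i ! r..<next_cut r}. F j (Suc r))"
    unfolding bracket_denom_def first next_cut_def[symmetric] using assms(3) later by simp
  also have "\<dots> = (\<Prod>j\<in>{1..<m}. F j (length (filter (\<lambda>x. x \<le> j) i)))"
    unfolding next_cut_def by (rule prod_intervals_sorted[OF assms(1,2)])
  finally show ?thesis
    by (simp add: F_def)
qed

section \<open>The rotation action\<close>

definition cyclic_prod :: "'a :: comm_monoid_mult list \<Rightarrow> nat \<Rightarrow> 'a" where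
  "cyclic_prod t n = (\<Prod>l<n. t ! (l mod length t))"

lemma cyclic_prod_add:
  "cyclic_prod t (a + c) = cyclic_prod t a * (\<Prod>s<c. t ! ((a + s) mod length t))"
  by (induction c) (simp_all add: cyclic_prod_def mult.assoc)

lemma cyclic_prod_add_eq_prod_rotate:
  "c \<le> length t \<Longrightarrow> cyclic_prod t (a + c) = cyclic_prod t a * (\<Prod>s<c. rotate a t ! s)"
  by (simp add: cyclic_prod_add nth_rotate)

lemma cyclic_prod_length_add: "cyclic_prod t (length t + n) = prod_list t * cyclic_prod t n"
proof -
  have "cyclic_prod t (length t) = prod_list t"
    by (auto simp: cyclic_prod_def prod.list_conv_set_nth atLeast0LessThan intro: prod.cong)
  then show ?thesis
    using cyclic_prod_add[of t "length t" n] by (simp add: cyclic_prod_def[of t n])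
qed

lemma cyclic_prod_add_mult_length:
  "cyclic_prod t (n + length t * e) = cyclic_prod t n * prod_list t ^ e"
proof (induction e)
  case (Suc e)
  then show ?case
    using cyclic_prod_length_add[of t "n + length t * e"] by (simp add: algebra_simps)
qed simp

lemma cyclic_prod_nonzero:
  fixes t :: "'a :: semidom list"
  assumes "t \<noteq> []" "0 \<notin> set t"
  shows "cyclic_prod t n \<noteq> 0"
proof -
  have "t ! (l mod length t) \<noteq> 0" for l
    by (metis assms length_greater_0_conv mod_less_divisor nth_mem)
  then show ?thesis
    by (simp add: cyclic_prod_def)
qed

lemma sum_take_rotate:
  fixes d :: "nat list"
  assumes "r < length d" "j \<le> length d"
  shows "sum_list (take j (rotate r d)) + sum_list (take r d)
       = sum_list (take ((r + j) mod length d) d) + (r + j) div length d * sum_list d"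
proof -
  have rotate: "rotate r d = drop r d @ take r d"
    using assms(1) by (simp add: rotate_drop_take)
  show ?thesis
  proof (cases "r + j < length d")
    case True
    then have "take j (rotate r d) = take j (drop r d)"
      by (simp add: rotate)
    moreover have "sum_list (take (r + j) d) = sum_list (take r d) + sum_list (take j (drop r d))"
      by (simp add: take_add)
    ultimately show ?thesis
      using True by simp
  next
    case False
    then have "0 < length d" "length d \<le> r + j" "r + j - length d < length d"
      using assms by auto
    then have "(r + j) mod length d = r + j - length d" "(r + j) div length d = 1"
      by (simp_all add: le_mod_geq le_div_geq)
    moreover have "take j (rotate r d) = drop r d @ take (r + j - length d) d"
      using False assms by (auto simp: rotate min_def add.commute)
    moreover have "sum_list d = sum_list (take r d) + sum_list (drop r d)"
      by (metis append_take_drop_id sum_list_append)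
    ultimately show ?thesis
      by simp
  qed
qed

definition lagrange_node :: "'a :: field \<Rightarrow> 'a list \<Rightarrow> nat \<Rightarrow> nat list \<Rightarrow> nat \<Rightarrow> 'a" where
  "lagrange_node q t a d s = q ^ s * cyclic_prod t (a + sum_list (take s d))"

lemma bracket_denom_tuple_of_counts:
  assumes "d \<in> weak_compositions m k" "length t = k" "k > 0" "0 \<notin> set t"
  shows "bracket_denom m q (rotate a t) (tuple_of_counts 1 d)
       = (\<Prod>j\<in>{1..<m}. 1 - lagrange_node q t a d j / lagrange_node q t a d 0)"
proof -
  have d: "length d = m" "sum_list d = k"
    using assms(1) by (simp_all add: weak_compositions_def)
  have "tuple_of_counts 1 d \<noteq> []"
    using assms(3) d length_tuple_of_counts[of 1 d] by (metis less_not_refl list.size(3))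
  moreover have "set (tuple_of_counts 1 d) \<subseteq> {1..m}"
    using d set_tuple_of_counts[of 1 d] by auto
  moreover have "q ^ j * (\<Prod>s<sum_list (take j d). rotate a t ! s)
      = lagrange_node q t a d j / lagrange_node q t a d 0" for j
  proof -
    have "sum_list (take j d) \<le> length t"
      using d assms(2) by (metis append_take_drop_id le_add1 sum_list_append)
    moreover have "cyclic_prod t a \<noteq> 0"
      using assms(2-4) by (intro cyclic_prod_nonzero) auto
    ultimately show ?thesis
      by (simp add: lagrange_node_def cyclic_prod_add_eq_prod_rotate)
  qed
  ultimately show ?thesis
    by (simp add: bracket_denom_eq_prod_levels sorted_tuple_of_counts
        length_filter_le_tuple_of_counts)
qed

lemma lagrange_node_rotate:
  fixes q :: "'a :: field" and a :: nat
  assumes "d \<in> weak_compositions m k" "length t = k" "r < m" "j < m"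
    and "q ^ m * prod_list t = 1"
  defines "N \<equiv> a + sum_list (take r d)"
  shows "lagrange_node q t (N mod k) (rotate r d) j * (q ^ r * prod_list t ^ (N div k))
       = lagrange_node q t a d ((r + j) mod m)"
proof -
  define s where "s = (r + j) mod m"
  define f where "f = (r + j) div m"
  have d: "length d = m" "sum_list d = k"
    using assms(1) by (simp_all add: weak_compositions_def)
  have "sum_list (take j (rotate r d)) + sum_list (take r d) = sum_list (take s d) + f * k"
    using sum_take_rotate[of r d j] assms(3,4) d by (simp add: s_def f_def)
  moreover have "N mod k + k * (N div k) = N"
    by simp
  ultimately have index: "N mod k + sum_list (take j (rotate r d)) + k * (N div k)
      = a + sum_list (take s d) + k * f"
    using N_def by (simp add: mult.commute)
  note periodic = cyclic_prod_add_mult_length[of t, unfolded assms(2)]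
  have "lagrange_node q t (N mod k) (rotate r d) j * (q ^ r * prod_list t ^ (N div k))
      = q ^ (r + j) * cyclic_prod t (N mod k + sum_list (take j (rotate r d)) + k * (N div k))"
    unfolding lagrange_node_def periodic power_add by (simp only: mult_ac)
  also have "\<dots> = q ^ (s + m * f) * (cyclic_prod t (a + sum_list (take s d)) * prod_list t ^ f)"
    unfolding index periodic s_def f_def by simp
  also have "\<dots> = lagrange_node q t a d s * (q ^ m * prod_list t) ^ f"
    unfolding lagrange_node_def power_add power_mult power_mult_distrib by (simp only: mult_ac)
  finally show ?thesis
    using assms(5) by (simp add: s_def)
qed

lemma bracket_denom_rotate_orbit:
  assumes "d \<in> weak_compositions m k" "length t = k" "k > 0" "0 \<notin> set t" "r < m"
    and "q ^ m * prod_list t = 1"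
  shows "bracket_denom m q (rotate ((a + sum_list (take r d)) mod k) t)
           (tuple_of_counts 1 (rotate r d))
       = (\<Prod>s\<in>{..<m} - {r}. 1 - lagrange_node q t a d s / lagrange_node q t a d r)"
proof -
  define N where "N = a + sum_list (take r d)"
  define y where "y = lagrange_node q t (N mod k) (rotate r d)"
  define x where "x = lagrange_node q t a d"
  define c where "c = q ^ r * prod_list t ^ (N div k)"
  have "q \<noteq> 0" "prod_list t \<noteq> 0"
    using assms(5,6) by (auto simp: power_0_left)
  then have "c \<noteq> 0"
    by (simp add: c_def)
  have scaled: "y j * c = x ((r + j) mod m)" if "j < m" for j
    using lagrange_node_rotate[OF assms(1,2,5) that assms(6)] by (simp add: x_def y_def c_def N_def)
  have ratio: "y j / y 0 = x ((r + j) mod m) / x r" if "j < m" for j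
  proof -
    have "y j / y 0 = (y j * c) / (y 0 * c)"
      using \<open>c \<noteq> 0\<close> by simp
    also have "\<dots> = x ((r + j) mod m) / x r"
      using scaled[OF that] scaled[of 0] assms(5) by simp
    finally show ?thesis .
  qed
  have "bracket_denom m q (rotate (N mod k) t) (tuple_of_counts 1 (rotate r d))
      = (\<Prod>j\<in>{1..<m}. 1 - y j / y 0)"
    unfolding y_def
    by (rule bracket_denom_tuple_of_counts[OF rotate_in_weak_compositions[OF assms(1)] assms(2-4)])
  also have "\<dots> = (\<Prod>j\<in>{1..<m}. 1 - x ((r + j) mod m) / x r)"
    using ratio by (intro prod.cong) auto
  also have "\<dots> = (\<Prod>s\<in>{..<m} - {r}. 1 - x s / x r)"
    by (rule prod.reindex_bij_betw[OF bij_betw_add_mod[OF assms(5)]])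
  finally show ?thesis
    by (simp add: N_def x_def)
qed

definition cyclic_shift :: "nat \<Rightarrow> nat \<Rightarrow> nat \<times> nat list \<Rightarrow> nat \<times> nat list" where
  "cyclic_shift k r = (\<lambda>(a, d). ((a + sum_list (take r d)) mod k, rotate r d))"

lemma bij_betw_cyclic_shift:
  assumes "k > 0"
  shows "bij_betw (cyclic_shift k r) ({..<k} \<times> weak_compositions m k)
                                      ({..<k} \<times> weak_compositions m k)"
proof -
  define P where "P = {..<k} \<times> weak_compositions m k"
  have "inj (rotate r :: nat list \<Rightarrow> nat list)"
    unfolding rotate_def by (simp add: inj_rotate1)
  then have "inj_on (cyclic_shift k r) P"
  proof (intro inj_onI, clarify)
    fix a d a' d'
    assume "inj (rotate r :: nat list \<Rightarrow> nat list)" "(a, d) \<in> P" "(a', d') \<in> P"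
      and "cyclic_shift k r (a, d) = cyclic_shift k r (a', d')"
    then show "a = a' \<and> d = d'"
      by (auto simp: P_def cyclic_shift_def dest: injD intro: mod_add_right_cancel_less)
  qed
  moreover have "cyclic_shift k r ` P \<subseteq> P"
    using assms by (auto simp: P_def cyclic_shift_def rotate_in_weak_compositions)
  ultimately show ?thesis
    by (simp add: P_def bij_betw_def endo_inj_surj finite_weak_compositions)
qed

lemma sum_bracket_orbit_eq_1:
  assumes "d \<in> weak_compositions m k" "length t = k" "k > 0" "0 \<notin> set t" "m > 0"
    and "q ^ m * prod_list t = 1"
    and "\<forall>j<k. \<forall>i\<in>index_tuples k m. bracket_denom m q (rotate j t) i \<noteq> 0"
  shows "(\<Sum>r<m. bracket m q (rotate ((a + sum_list (take r d)) mod k) t)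
                              (tuple_of_counts 1 (rotate r d))) = 1"
proof -
  define x where "x = lagrange_node q t a d"
  have orbit: "bracket_denom m q (rotate ((a + sum_list (take r d)) mod k) t)
                 (tuple_of_counts 1 (rotate r d))
      = (\<Prod>s\<in>{..<m} - {r}. 1 - x s / x r)" if "r < m" for r
    unfolding x_def using bracket_denom_rotate_orbit[OF assms(1-4) that assms(6)] .
  have "q \<noteq> 0"
    using assms(5,6) by (auto simp: power_0_left)
  then have nonzero: "x r \<noteq> 0" for r
    using assms(2-4) cyclic_prod_nonzero[of t] by (auto simp: x_def lagrange_node_def)
  have "inj_on x {..<m}"
  proof (rule inj_onI, rule ccontr)
    fix r s assume "r \<in> {..<m}" "s \<in> {..<m}" "x r = x s" "r \<noteq> s"
    then have "(\<Prod>s\<in>{..<m} - {r}. 1 - x s / x r) = 0"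
      using nonzero[of r] by (intro prod_zero) (auto intro!: bexI[of _ s])
    then have "bracket_denom m q (rotate ((a + sum_list (take r d)) mod k) t)
                 (tuple_of_counts 1 (rotate r d)) = 0"
      using orbit \<open>r \<in> {..<m}\<close> by simp
    moreover have "tuple_of_counts 1 (rotate r d) \<in> index_tuples k m"
      using bij_betw_imp_surj_on[OF bij_betw_tuple_of_counts]
        rotate_in_weak_compositions[OF assms(1)]
      by blast
    ultimately show False
      using assms(3,7) by simp
  qed
  have "(\<Sum>r<m. bracket m q (rotate ((a + sum_list (take r d)) mod k) t)
                     (tuple_of_counts 1 (rotate r d)))
      = (\<Sum>r<m. 1 / (\<Prod>s\<in>{..<m} - {r}. 1 - x s / x r))"
    by (rule sum.cong[OF refl]) (simp only: bracket_def orbit lessThan_iff)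
  also have "\<dots> = 1"
    using \<open>inj_on x {..<m}\<close> nonzero assms(5) by (rule sum_inverse_prod_one_minus_ratio_eq_1)
  finally show ?thesis .
qed

lemma of_nat_mult_sum_tilde_sum_rotate:
  assumes "m > 0" "k > 0" "length t = k" "q ^ m * prod_list t = 1"
    and "\<forall>j<k. \<forall>i\<in>index_tuples k m. bracket_denom m q (rotate j t) i \<noteq> 0"
  shows "of_nat m * (\<Sum>j<k. tilde_sum m q (rotate j t)) = of_nat k * (of_nat m ^ k / fact k)"
proof -
  have "0 \<notin> set t"
    using assms(4) by (metis mult_zero_right prod_list_zero_iff zero_neq_one)
  define A where "A = {..<k} \<times> weak_compositions m k"
  define w where "w = (\<lambda>(a :: nat, d). 1 / of_nat (prod_list (map fact d)) :: complex)"
  define g where "g = (\<lambda>(a, d). bracket m q (rotate a t) (tuple_of_counts 1 d))"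
  have "(\<Sum>j<k. tilde_sum m q (rotate j t)) = (\<Sum>p\<in>A. w p * g p)"
    by (simp add: tilde_sum_eq_sum_weak_compositions assms(3) A_def w_def g_def
        sum.cartesian_product case_prod_unfold)
  also have "of_nat m * \<dots> = (\<Sum>p\<in>A. w p)"
  proof (rule sum_weighted_orbit_average)
    show "bij_betw (cyclic_shift k r) A A" for r
      using bij_betw_cyclic_shift[OF assms(2)] by (simp add: A_def)
    show "w (cyclic_shift k r p) = w p" for r p
      by (cases p) (simp add: w_def cyclic_shift_def rotate_map[symmetric])
    show "(\<Sum>r<m. g (cyclic_shift k r p)) = 1" if "p \<in> A" for p
    proof (cases p)
      case (Pair a d)
      then show ?thesis
        using that sum_bracket_orbit_eq_1[of d m k t q a] assms \<open>0 \<notin> set t\<close>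
        by (simp add: A_def g_def cyclic_shift_def)
    qed
  qed
  also have "\<dots> = of_nat k * (of_nat m ^ k / fact k)"
    by (simp add: A_def w_def sum.cartesian_product[symmetric] sum_weak_compositions_inverse_fact)
  finally show ?thesis .
qed

theorem theorem9p2:
  fixes m k :: nat and q :: complex and t :: "complex list"
  assumes "m > 0" and "k > 0" and "length t = k"
    and "q ^ m * prod_list t = 1"
    and "\<forall>j<k. \<forall>i\<in>index_tuples k m. bracket_denom m q (rotate j t) i \<noteq> 0"
  shows "(\<Sum>j<k. tilde_sum m q (rotate j t)) = of_nat (m ^ (k - 1)) / of_nat (fact (k - 1))"
proof -
  have "of_nat m * (\<Sum>j<k. tilde_sum m q (rotate j t)) = of_nat k * (of_nat m ^ k / fact k)"
    using of_nat_mult_sum_tilde_sum_rotate[OF assms] .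
  also have "\<dots> = of_nat m * (of_nat m ^ (k - 1) / fact (k - 1))"
    using assms(2) by (cases k) (simp_all add: field_simps del: of_nat_Suc)
  finally show ?thesis
    using assms(1) by (subst (asm) mult_left_cancel) auto
qed

end
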